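(* Any function $K\in\mathfrak C_{cl}(\gamma_j)$ that vanishes on $\gamma_j$ can be written, in a neighbourhood of $\gamma_j$, $$K(x,\xi,y,\eta)=K(\xi,y,\eta)=a(\xi-c_o)+b\,y\eta$$ for some smooth functions $a,b\in\mathfrak C_{cl}(\gamma_j)$.
   Context: Let $\sigma$ be either $\sigma(x,y)=(x+2\pi,y)$ (direct case) or $\sigma(x,y)=(x+\pi,-y)$ (reverse case) acting on $\mathbb R^2$, and consider the cotangent bundle $T^*(\mathbb R^2/\sigma)$ with canonical coordinates $(x,y,\xi,\eta)$ (functions on it are functions on $T^*\mathbb R^2$ invariant under the cotangent lift of $\sigma$). Fix $c_o\in\mathbb R$ and let $\gamma_j=((\mathbb R\times\{0\})/\sigma)\times\{c_o\}\times\{0\}$, i.e. the circle $\{y=0,\ \xi=c_o,\ \eta=0\}$. The classical commutant is $\mathfrak C_{cl}(\gamma_j)=\{f\in C^\infty(T^*(\mathbb R^2/\sigma)) : \{f,\xi\}=\{f,y\eta\}=0 \text{ near }\gamma_j\}$, where $\{\cdot,\cdot\}$ is the Poisson bracket. *)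

theory Defs
  imports "HOL-Analysis.Analysis"
begin

text \<open>Points of T*R^2 with canonical coordinates (x, y, xi, eta).\<close>
type_synonym pt = "real \<times> real \<times> real \<times> real"

definition pd :: "pt \<Rightarrow> (pt \<Rightarrow> real) \<Rightarrow> pt \<Rightarrow> real" where
  "pd v f p = frechet_derivative f (at p) v"

definition e_x :: pt where "e_x = (1, 0, 0, 0)"
definition e_y :: pt where "e_y = (0, 1, 0, 0)"
definition e_xi :: pt where "e_xi = (0, 0, 1, 0)"
definition e_eta :: pt where "e_eta = (0, 0, 0, 1)"

fun Ck :: "nat \<Rightarrow> (pt \<Rightarrow> real) \<Rightarrow> bool" where
  "Ck 0 f = continuous_on UNIV f"
| "Ck (Suc k) f = (f differentiable_on UNIV \<and> (\<forall>v\<in>Basis. Ck k (pd v f)))"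

definition smooth :: "(pt \<Rightarrow> real) \<Rightarrow> bool" where
  "smooth f \<longleftrightarrow> (\<forall>k. Ck k f)"

definition poisson :: "(pt \<Rightarrow> real) \<Rightarrow> (pt \<Rightarrow> real) \<Rightarrow> pt \<Rightarrow> real" where
  "poisson f g p = pd e_xi f p * pd e_x g p - pd e_x f p * pd e_xi g p
                 + pd e_eta f p * pd e_y g p - pd e_y f p * pd e_eta g p"

datatype sigma_case = Direct | Reverse

fun sigma_lift :: "sigma_case \<Rightarrow> pt \<Rightarrow> pt" where
  "sigma_lift Direct (x, y, xi, eta) = (x + 2 * pi, y, xi, eta)"
| "sigma_lift Reverse (x, y, xi, eta) = (x + pi, - y, xi, - eta)"

text \<open>Smooth functions on T*(R^2/sigma) = smooth sigma-invariant functions on T*R^2.\<close>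
definition smooth_quot :: "sigma_case \<Rightarrow> (pt \<Rightarrow> real) set" where
  "smooth_quot s = {f. smooth f \<and> (\<forall>p. f (sigma_lift s p) = f p)}"

text \<open>The (lift of the) circle gamma_j = {y = 0, xi = c_o, eta = 0}.\<close>
definition gamma :: "real \<Rightarrow> pt set" where
  "gamma c = {(x, 0, c, 0) | x. True}"

definition xi_fun :: "pt \<Rightarrow> real" where "xi_fun = (\<lambda>(x, y, xi, eta). xi)"
definition yeta_fun :: "pt \<Rightarrow> real" where "yeta_fun = (\<lambda>(x, y, xi, eta). y * eta)"

definition commutant :: "sigma_case \<Rightarrow> real \<Rightarrow> (pt \<Rightarrow> real) set" where
  "commutant s c = {f. f \<in> smooth_quot s \<and>
     (\<exists>U. open U \<and> gamma c \<subseteq> U \<and>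
        (\<forall>p\<in>U. poisson f xi_fun p = 0 \<and> poisson f yeta_fun p = 0))}"

end

theory Submission
  imports Defs
begin

text \<open>
  Because \<open>K\<close> is \<open>2\<pi>\<close>-periodic in \<open>x\<close>, the bracket conditions hold on a whole tube
  \<open>|y|, |xi - c|, |eta| < r\<close>. There \<open>{K, xi} = 0\<close> makes \<open>K\<close> independent of \<open>x\<close>, and
  \<open>{K, y eta} = eta K\<^sub>\<eta> - y K\<^sub>y = 0\<close>, restricted to \<open>eta = 0\<close> and to \<open>y = 0\<close>, gives
  \<open>K(x, y, xi, 0) = K(x, 0, xi, 0) = K(x, 0, xi, eta)\<close>. Hadamard's lemma writes
  \<open>K = a (xi - c) + b y eta\<close> with \<open>a, b\<close> integrals of derivatives of \<open>K\<close>; they are smooth by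
  differentiation under the integral sign and \<open>sigma\<close>-invariant along with \<open>K\<close>.
  Differentiating the identities \<open>(xi - c) a = K(x, 0, xi, 0) - K(x, 0, c, 0)\<close> and
  \<open>y eta b = K(x, y, xi, eta) - K(x, y, xi, 0) - K(x, 0, xi, eta) + K(x, 0, xi, 0)\<close> along \<open>\<partial>\<^sub>x\<close>
  and along the Hamiltonian field of \<open>y eta\<close> shows that the brackets of \<open>a\<close> and \<open>b\<close> vanish off
  the hyperplanes \<open>y = 0\<close>, \<open>xi = c\<close>, \<open>eta = 0\<close>, hence on the whole tube by continuity.
\<close>

lemma Basis_pt: "(Basis :: pt set) = {e_x, e_y, e_xi, e_eta}"
  by (simp add: Basis_prod_def e_x_def e_y_def e_xi_def e_eta_def zero_prod_def insert_commute)

lemma coordinate_vectors_in_Basis: "e_x \<in> Basis" "e_y \<in> Basis" "e_xi \<in> Basis" "e_eta \<in> Basis"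
  by (auto simp: Basis_pt)

lemma smooth_pd: "smooth f \<Longrightarrow> v \<in> Basis \<Longrightarrow> smooth (pd v f)"
  unfolding smooth_def by (metis Ck.simps(2))

lemma smooth_imp_continuous_on: "smooth f \<Longrightarrow> continuous_on S f"
  unfolding smooth_def by (metis Ck.simps(1) continuous_on_subset top_greatest)

lemma continuous_on_smooth_compose:
  "smooth f \<Longrightarrow> continuous_on S h \<Longrightarrow> continuous_on S (\<lambda>x. f (h x))"
  using continuous_on_compose2[OF smooth_imp_continuous_on] by blast

lemma smooth_has_derivative: "smooth f \<Longrightarrow> (f has_derivative (\<lambda>v. pd v f p)) (at p)"
  unfolding smooth_def pd_def
  by (metis Ck.simps(2) differentiable_on_def UNIV_I frechet_derivative_works)

lemma pd_eqI: "(f has_derivative F) (at p) \<Longrightarrow> pd v f p = F v"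
  unfolding pd_def by (metis frechet_derivative_at)

lemma linear_pd: "smooth f \<Longrightarrow> linear (\<lambda>v. pd v f p)"
  using smooth_has_derivative has_derivative_linear by blast

lemma pd_scaleR: "smooth f \<Longrightarrow> pd (a *\<^sub>R v) f p = a * pd v f p"
  using linear_pd linear_scale by fastforce

lemma pd_add: "smooth f \<Longrightarrow> pd (v + w) f p = pd v f p + pd w f p"
  using linear_pd linear_add by fastforce

lemma pd_coords:
  assumes "smooth f"
  shows "pd (a, b, c, d) f p = a * pd e_x f p + b * pd e_y f p + c * pd e_xi f p + d * pd e_eta f p"
proof -
  have "(a, b, c, d) = a *\<^sub>R e_x + b *\<^sub>R e_y + c *\<^sub>R e_xi + d *\<^sub>R e_eta"
    by (simp add: e_x_def e_y_def e_xi_def e_eta_def)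
  then show ?thesis
    by (simp add: pd_add pd_scaleR assms)
qed

definition coord_mult :: "pt \<Rightarrow> pt \<Rightarrow> pt" where
  "coord_mult a p = (fst a * fst p, fst (snd a) * fst (snd p), fst (snd (snd a)) * fst (snd (snd p)),
     snd (snd (snd a)) * snd (snd (snd p)))"

lemma bounded_linear_coord_mult: "bounded_linear (coord_mult a)"
  by (simp add: linear_conv_bounded_linear[symmetric]) (rule linearI; simp add: coord_mult_def algebra_simps)

lemma coord_mult_Basis: "v \<in> Basis \<Longrightarrow> coord_mult a v = (a \<bullet> v) *\<^sub>R v"
  by (auto simp: Basis_pt coord_mult_def e_x_def e_y_def e_xi_def e_eta_def inner_prod_def)

lemma continuous_on_coord_mult [continuous_intros]:
  "continuous_on S f \<Longrightarrow> continuous_on S g \<Longrightarrow> continuous_on S (\<lambda>x. coord_mult (f x) (g x))"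
  unfolding coord_mult_def by (intro continuous_intros)

text \<open>Restricting the affine maps inside the integrand to diagonal ones is what makes the
  derivative of a parametric integral again a parametric integral, of the derivative.\<close>
definition param_integral :: "'a::euclidean_space set \<Rightarrow> (pt \<Rightarrow> real) \<Rightarrow> ('a \<Rightarrow> real) \<Rightarrow>
    ('a \<Rightarrow> pt) \<Rightarrow> ('a \<Rightarrow> pt) \<Rightarrow> pt \<Rightarrow> real" where
  "param_integral S f g m w p = integral S (\<lambda>t. g t * f (coord_mult (m t) p + w t))"

lemma continuous_on_param_integrand:
  fixes lo hi :: "'a::euclidean_space"
  assumes f: "smooth f" and g: "continuous_on (cbox lo hi) g"
    and m: "continuous_on (cbox lo hi) m" and w: "continuous_on (cbox lo hi) w"
  shows "continuous_on (UNIV \<times> cbox lo hi)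
    (\<lambda>x. g (snd x) * f (coord_mult (m (snd x)) (fst x) + w (snd x)))"
proof -
  have "snd ` (UNIV \<times> cbox lo hi) \<subseteq> cbox lo hi" by auto
  note snd = continuous_on_compose2[OF _ continuous_on_snd this]
  show ?thesis
    by (intro continuous_intros continuous_on_smooth_compose[OF f] snd[OF g] snd[OF m] snd[OF w])
qed

lemma has_derivative_param_integral:
  fixes lo hi :: "'a::euclidean_space"
  assumes f: "smooth f" and g: "continuous_on (cbox lo hi) g"
    and m: "continuous_on (cbox lo hi) m" and w: "continuous_on (cbox lo hi) w"
  shows "(param_integral (cbox lo hi) f g m w has_derivative
           (\<lambda>v. integral (cbox lo hi) (\<lambda>t. g t * pd (coord_mult (m t) v) f (coord_mult (m t) p + w t)))) (at p)"
proof -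
  define A where "A t q = coord_mult (m t) q + w t" for t q
  define fx where "fx q t = Blinfun (\<lambda>v. g t * pd (coord_mult (m t) v) f (A t q))" for q t
  have "bounded_linear (\<lambda>v. g t * pd (coord_mult (m t) v) f (A t q))" for t q
    using bounded_linear_compose[OF has_derivative_bounded_linear[OF smooth_has_derivative[OF f]]
        bounded_linear_coord_mult]
    by (rule bounded_linear_compose[OF bounded_linear_mult_right])
  then have fx_apply: "blinfun_apply (fx q t) = (\<lambda>v. g t * pd (coord_mult (m t) v) f (A t q))" for q t
    unfolding fx_def by (simp add: bounded_linear_Blinfun_apply)
  have fx_deriv: "((\<lambda>q. g t * f (A t q)) has_derivative blinfun_apply (fx q t)) (at q within UNIV)" for q t
  proof -
    have "(A t has_derivative coord_mult (m t)) (at q)"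
      unfolding A_def
      by (intro has_derivative_add_const bounded_linear_imp_has_derivative bounded_linear_coord_mult)
    from has_derivative_compose[OF this smooth_has_derivative[OF f]]
    show ?thesis unfolding fx_apply by (auto intro: has_derivative_mult_right)
  qed
  have integrable: "(\<lambda>t. g t * f (A t q)) integrable_on cbox lo hi" for q
    unfolding A_def
    by (intro integrable_continuous continuous_intros g m w continuous_on_smooth_compose[OF f])
  have cont_fx: "continuous_on (UNIV \<times> cbox lo hi) (\<lambda>(q, t). fx q t)"
  proof (rule continuous_on_blinfun_componentwise)
    fix i :: pt assume i: "i \<in> Basis"
    have "continuous_on (cbox lo hi) (\<lambda>t. g t * (m t \<bullet> i))"
      by (intro continuous_intros g m)
    from continuous_on_param_integrand[OF smooth_pd[OF f i] this m w]
    show "continuous_on (UNIV \<times> cbox lo hi) (\<lambda>x. (\<lambda>(q, t). fx q t) x i)"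
      by (simp add: case_prod_beta fx_apply A_def coord_mult_Basis[OF i] pd_scaleR[OF f] mult.assoc)
  qed
  have "((\<lambda>q. integral (cbox lo hi) (\<lambda>t. g t * f (A t q))) has_derivative
      integral (cbox lo hi) (fx p)) (at p within UNIV)"
    by (rule leibniz_rule[where fx=fx]) (use fx_deriv integrable cont_fx in auto)
  moreover have "fx p integrable_on cbox lo hi"
  proof (rule integrable_continuous)
    have "continuous_on (cbox lo hi) (\<lambda>t. (\<lambda>(q, t). fx q t) (p, t))"
      by (rule continuous_on_compose2[OF cont_fx]) (auto intro!: continuous_intros)
    then show "continuous_on (cbox lo hi) (fx p)" by simp
  qed
  then have "blinfun_apply (integral (cbox lo hi) (fx p)) =
      (\<lambda>v. integral (cbox lo hi) (\<lambda>t. g t * pd (coord_mult (m t) v) f (A t p)))"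
    by (intro ext) (simp add: blinfun_apply_integral fx_apply)
  ultimately show ?thesis
    unfolding param_integral_def A_def[symmetric] by simp
qed

lemma pd_param_integral:
  fixes lo hi :: "'a::euclidean_space"
  assumes f: "smooth f" and g: "continuous_on (cbox lo hi) g"
    and m: "continuous_on (cbox lo hi) m" and w: "continuous_on (cbox lo hi) w" and v: "v \<in> Basis"
  shows "pd v (param_integral (cbox lo hi) f g m w) =
    param_integral (cbox lo hi) (pd v f) (\<lambda>t. g t * (m t \<bullet> v)) m w"
  using pd_eqI[OF has_derivative_param_integral[OF f g m w]]
  by (simp add: fun_eq_iff param_integral_def coord_mult_Basis[OF v] pd_scaleR[OF f] mult.assoc)

lemma smooth_param_integral:
  fixes lo hi :: "'a::euclidean_space"
  assumes f: "smooth f" and g: "continuous_on (cbox lo hi) g"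
    and m: "continuous_on (cbox lo hi) m" and w: "continuous_on (cbox lo hi) w"
  shows "smooth (param_integral (cbox lo hi) f g m w)"
  unfolding smooth_def
proof
  fix k show "Ck k (param_integral (cbox lo hi) f g m w)"
    using f g
  proof (induction k arbitrary: f g)
    case 0
    then show ?case
      using has_derivative_continuous[OF has_derivative_param_integral[OF _ _ m w]]
      by (simp add: continuous_at_imp_continuous_on)
  next
    case (Suc k)
    have "Ck k (pd v (param_integral (cbox lo hi) f g m w))" if v: "v \<in> Basis" for v
      unfolding pd_param_integral[OF Suc.prems m w v]
      by (intro Suc.IH smooth_pd[OF Suc.prems(1) v] continuous_intros Suc.prems(2) m)
    moreover have "param_integral (cbox lo hi) f g m w differentiable_on UNIV"
      using has_derivative_param_integral[OF Suc.prems m w]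
      by (meson differentiableI differentiable_at_imp_differentiable_on)
    ultimately show ?case by simp
  qed
qed

lemma has_real_derivative_line:
  assumes "smooth f"
  shows "((\<lambda>t. f (q + t *\<^sub>R v)) has_real_derivative pd v f (q + t *\<^sub>R v)) (at t within S)"
proof -
  have "((\<lambda>t. q + t *\<^sub>R v) has_derivative (\<lambda>h. h *\<^sub>R v)) (at t within S)"
    by (auto intro!: derivative_eq_intros)
  from has_derivative_compose[OF this has_derivative_at_withinI[OF smooth_has_derivative[OF assms]]]
  show ?thesis
    unfolding has_field_derivative_def
    by (rule has_derivative_eq_rhs) (simp add: fun_eq_iff pd_scaleR[OF assms])
qed

lemma integral_pd_line:
  assumes "smooth f"
  shows "integral {0..1} (\<lambda>t. pd v f (q + t *\<^sub>R v)) = f (q + v) - f q"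
proof -
  have "((\<lambda>t. pd v f (q + t *\<^sub>R v)) has_integral (f (q + 1 *\<^sub>R v) - f (q + 0 *\<^sub>R v))) {0..1}"
    by (rule fundamental_theorem_of_calculus)
      (auto simp: has_real_derivative_iff_has_vector_derivative[symmetric]
        intro!: has_real_derivative_line[OF assms])
  then show ?thesis by (simp add: integral_unique)
qed

lemma eq_if_pd_line_eq_0:
  assumes "smooth f" "\<And>t. 0 < t \<Longrightarrow> t < 1 \<Longrightarrow> pd v f (q + t *\<^sub>R v) = 0"
  shows "f (q + v) = f q"
proof -
  have "(\<lambda>t. f (q + t *\<^sub>R v)) 1 = (\<lambda>t. f (q + t *\<^sub>R v)) 0"
  proof (rule DERIV_isconst_end[where f = "\<lambda>t. f (q + t *\<^sub>R v)"])
    show "continuous_on {0..1} (\<lambda>t. f (q + t *\<^sub>R v))"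
      by (intro continuous_on_smooth_compose[OF assms(1)] continuous_intros)
    show "((\<lambda>t. f (q + t *\<^sub>R v)) has_real_derivative 0) (at t)" if "0 < t" "t < 1" for t
      using has_real_derivative_line[OF assms(1), of q v t UNIV] assms(2)[OF that] by simp
  qed simp
  then show ?thesis by simp
qed

lemma pd_eq_0_if_weighted_line_deriv_eq_0:
  assumes f: "smooth f" and m: "(m has_real_derivative 0) (at 0)" "m 0 \<noteq> 0"
    and mf: "((\<lambda>t. m t * f (q + t *\<^sub>R v)) has_real_derivative 0) (at 0)"
  shows "pd v f q = 0"
proof -
  have "((\<lambda>t. m t * f (q + t *\<^sub>R v)) has_real_derivative m 0 * pd v f q) (at 0)"
    using DERIV_mult[OF m(1) has_real_derivative_line[OF f, of q v 0 UNIV]] by (simp add: mult.commute)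
  then have "m 0 * pd v f q = 0"
    using mf DERIV_unique by blast
  then show ?thesis using m(2) by simp
qed

lemma pd_eq_0_if_scaled_line_const:
  assumes "smooth f" "m \<noteq> 0" "\<And>t. m * f (q + t *\<^sub>R v) = C"
  shows "pd v f q = 0"
  by (rule pd_eq_0_if_weighted_line_deriv_eq_0[OF assms(1), of "\<lambda>_. m"]) (simp_all add: assms(2,3))

lemma pd_affine_invariant:
  assumes "smooth f" "bounded_linear L" "\<And>q. f (L q + w) = k * f q"
  shows "pd (L v) f (L p + w) = k * pd v f p"
proof -
  have "((\<lambda>q. L q + w) has_derivative L) (at p)"
    by (intro has_derivative_add_const bounded_linear_imp_has_derivative assms(2))
  from has_derivative_compose[OF this smooth_has_derivative[OF assms(1)]]
  have "((\<lambda>q. k * f q) has_derivative (\<lambda>h. pd (L h) f (L p + w))) (at p)"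
    using assms(3) by simp
  moreover have "((\<lambda>q. k * f q) has_derivative (\<lambda>h. k * pd h f p)) (at p)"
    using has_derivative_mult_right[OF smooth_has_derivative[OF assms(1)]] .
  ultimately have "(\<lambda>h. pd (L h) f (L p + w)) = (\<lambda>h. k * pd h f p)"
    by (rule has_derivative_unique)
  from fun_cong[OF this, of v] show ?thesis by simp
qed

lemma periodic_of_int:
  fixes w :: "'a::real_vector"
  assumes "\<And>q. f (q + w) = f q"
  shows "f (p + of_int k *\<^sub>R w) = f p"
proof (induction k rule: int_induct[where k = 0])
  case (step1 i)
  have "p + of_int (i + 1) *\<^sub>R w = (p + of_int i *\<^sub>R w) + w"
    by (simp add: algebra_simps)
  then show ?case using step1 by (simp only: assms)
next
  case (step2 i)
  then show ?case using assms[of "p + of_int (i - 1) *\<^sub>R w"] by (simp add: algebra_simps)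
qed simp

lemma continuous_eq_0_from_ray:
  fixes F :: "'a::real_normed_vector \<Rightarrow> real"
  assumes "continuous_on UNIV F" "open T" "p \<in> T"
    and "\<And>q. q \<in> T \<Longrightarrow> P q \<Longrightarrow> F q = 0" and "\<And>t. t > 0 \<Longrightarrow> P (p + t *\<^sub>R d)"
  shows "F p = 0"
proof -
  have ray: "((\<lambda>t. p + t *\<^sub>R d) \<longlongrightarrow> p) (at_right 0)"
    by (auto intro!: tendsto_eq_intros)
  have "((\<lambda>t. F (p + t *\<^sub>R d)) \<longlongrightarrow> F p) (at_right 0)"
    using continuous_on_tendsto_compose[OF assms(1) ray] by simp
  moreover have "eventually (\<lambda>t. F (p + t *\<^sub>R d) = 0) (at_right 0)"
    using topological_tendstoD[OF ray assms(2,3)] eventually_at_right_less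
    by eventually_elim (use assms(4,5) in blast)
  then have "((\<lambda>t. F (p + t *\<^sub>R d)) \<longlongrightarrow> 0) (at_right 0)"
    by (rule tendsto_eventually)
  ultimately show ?thesis
    using tendsto_unique trivial_limit_at_right_real by blast
qed

definition tube :: "real \<Rightarrow> real \<Rightarrow> pt set" where
  "tube c r = {(x, y, xi, eta). \<bar>y\<bar> < r \<and> \<bar>xi - c\<bar> < r \<and> \<bar>eta\<bar> < r}"

lemma mem_tube [simp]: "(x, y, xi, eta) \<in> tube c r \<longleftrightarrow> \<bar>y\<bar> < r \<and> \<bar>xi - c\<bar> < r \<and> \<bar>eta\<bar> < r"
  by (simp add: tube_def)

lemma open_tube: "open (tube c r)"
proof -
  have "tube c r = {p. \<bar>fst (snd p)\<bar> < r} \<inter> {p. \<bar>fst (snd (snd p)) - c\<bar> < r} \<inter> {p. \<bar>snd (snd (snd p))\<bar> < r}"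
    by (auto simp: tube_def)
  then show ?thesis by (auto intro!: open_Int open_Collect_less continuous_intros)
qed

lemma gamma_subset_tube: "r > 0 \<Longrightarrow> gamma c \<subseteq> tube c r"
  by (auto simp: gamma_def)

lemma tube_eq_0_if_eq_0_off_axes:
  fixes F :: "pt \<Rightarrow> real"
  assumes "continuous_on UNIV F" "p \<in> tube c r"
    and "\<And>x y xi eta. (x, y, xi, eta) \<in> tube c r \<Longrightarrow> y \<noteq> 0 \<Longrightarrow> xi \<noteq> c \<Longrightarrow> eta \<noteq> 0 \<Longrightarrow>
      F (x, y, xi, eta) = 0"
  shows "F p = 0"
proof -
  define away :: "real \<Rightarrow> real" where "away z = (if z < 0 then -1 else 1)" for z
  have away: "z + t * away z \<noteq> 0" if "t > 0" for z t
    using that by (auto simp: away_def)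
  obtain x y xi eta where p: "p = (x, y, xi, eta)" by (cases p)
  show ?thesis
  proof (rule continuous_eq_0_from_ray[OF assms(1) open_tube assms(2),
        where P = "\<lambda>(x, y, xi, eta). y \<noteq> 0 \<and> xi \<noteq> c \<and> eta \<noteq> 0"
          and d = "(0, away y, away (xi - c), away eta)"])
    show "F q = 0" if "q \<in> tube c r" "(\<lambda>(x, y, xi, eta). y \<noteq> 0 \<and> xi \<noteq> c \<and> eta \<noteq> 0) q" for q
      using that assms(3) by (cases q) auto
    show "(\<lambda>(x, y, xi, eta). y \<noteq> 0 \<and> xi \<noteq> c \<and> eta \<noteq> 0) (p + t *\<^sub>R (0, away y, away (xi - c), away eta))"
      if "t > 0" for t
      using away[OF that, of y] away[OF that, of "xi - c"] away[OF that, of eta]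
      by (auto simp: p algebra_simps)
  qed
qed

definition commutes_on :: "pt set \<Rightarrow> (pt \<Rightarrow> real) \<Rightarrow> bool" where
  "commutes_on U f \<longleftrightarrow> (\<forall>p\<in>U. poisson f xi_fun p = 0 \<and> poisson f yeta_fun p = 0)"

lemma commutant_iff:
  "f \<in> commutant s c \<longleftrightarrow> smooth f \<and> (\<forall>p. f (sigma_lift s p) = f p) \<and>
    (\<exists>U. open U \<and> gamma c \<subseteq> U \<and> commutes_on U f)"
  by (auto simp: commutant_def smooth_quot_def commutes_on_def)

lemma poisson_xi_fun: "poisson f xi_fun p = - pd e_x f p"
proof -
  have "(xi_fun has_derivative (\<lambda>v. fst (snd (snd v)))) (at p)"
    unfolding xi_fun_def case_prod_beta
    by (intro bounded_linear_imp_has_derivative bounded_linear_compose[OF bounded_linear_fst]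
        bounded_linear_compose[OF bounded_linear_snd] bounded_linear_snd)
  then show ?thesis
    by (simp add: poisson_def pd_eqI e_x_def e_y_def e_xi_def e_eta_def)
qed

lemma poisson_yeta_fun:
  "poisson f yeta_fun (x, y, xi, eta) = eta * pd e_eta f (x, y, xi, eta) - y * pd e_y f (x, y, xi, eta)"
proof -
  have "(yeta_fun has_derivative (\<lambda>v. fst (snd v) * eta + y * snd (snd (snd v)))) (at (x, y, xi, eta))"
    unfolding yeta_fun_def case_prod_beta by (auto intro!: derivative_eq_intros)
  then show ?thesis
    by (simp add: poisson_def pd_eqI e_x_def e_y_def e_xi_def e_eta_def)
qed

text \<open>The vector \<open>(0, -y, 0, eta)\<close> is the Hamiltonian field of \<open>y * eta\<close> at \<open>(x, y, xi, eta)\<close>.\<close>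
lemma commutes_on_iff:
  assumes "smooth f"
  shows "commutes_on U f \<longleftrightarrow> (\<forall>x y xi eta. (x, y, xi, eta) \<in> U \<longrightarrow>
    pd e_x f (x, y, xi, eta) = 0 \<and> pd (0, - y, 0, eta) f (x, y, xi, eta) = 0)"
  by (auto simp: commutes_on_def poisson_xi_fun poisson_yeta_fun pd_coords[OF assms])

lemma tube_segment_subset:
  assumes "open U" "gamma c \<subseteq> U"
  obtains r where "r > 0"
    "\<And>x y xi eta. x \<in> {a..b} \<Longrightarrow> (x, y, xi, eta) \<in> tube c r \<Longrightarrow> (x, y, xi, eta) \<in> U"
proof -
  let ?C = "(\<lambda>x. (x, 0, c, 0) :: pt) ` {a..b}"
  have "compact ?C" by (intro compact_continuous_image continuous_intros compact_Icc)
  moreover have "?C \<subseteq> U" using assms(2) by (auto simp: gamma_def)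
  ultimately obtain \<epsilon> where "\<epsilon> > 0" and \<epsilon>: "(\<Union>q\<in>?C. ball q \<epsilon>) \<subseteq> U"
    using compact_subset_open_imp_ball_epsilon_subset assms(1) by blast
  have "(x, y, xi, eta) \<in> U" if "x \<in> {a..b}" "(x, y, xi, eta) \<in> tube c (\<epsilon> / 3)" for x y xi eta
  proof -
    have "dist (x, 0, c, 0) (x, y, xi, eta) = norm ((0::real), - y, c - xi, - eta)"
      by (simp add: dist_norm)
    also have "\<dots> \<le> \<bar>y\<bar> + \<bar>xi - c\<bar> + \<bar>eta\<bar>"
      using norm_Pair_le[of "0::real" "(- y, c - xi, - eta)"] norm_Pair_le[of "- y" "(c - xi, - eta)"]
        norm_Pair_le[of "c - xi" "- eta"]
      by (simp add: abs_minus_commute)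
    also have "\<dots> < \<epsilon>" using that(2) by simp
    finally show ?thesis using \<epsilon> that(1) by force
  qed
  then show ?thesis using that[of "\<epsilon> / 3"] \<open>\<epsilon> > 0\<close> by simp
qed

lemma sigma_lift_periodic:
  assumes "\<And>q. f (sigma_lift s q) = f q"
  shows "f (p + (2 * pi, 0, 0, 0)) = f p"
proof (cases s)
  case Direct
  then have "sigma_lift s p = p + (2 * pi, 0, 0, 0)" by (cases p) simp
  then show ?thesis using assms[of p] by simp
next
  case Reverse
  then have "sigma_lift s (sigma_lift s p) = p + (2 * pi, 0, 0, 0)" by (cases p) simp
  then show ?thesis using assms[of p] assms[of "sigma_lift s p"] by simp
qed

lemma commutant_commutes_on_tube:
  assumes "K \<in> commutant s c"
  obtains r where "r > 0" "commutes_on (tube c r) K"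
proof -
  obtain U where K: "smooth K" "\<And>p. K (sigma_lift s p) = K p"
    and U: "open U" "gamma c \<subseteq> U" "commutes_on U K"
    using assms by (auto simp: commutant_iff)
  obtain r where "r > 0"
    and r: "\<And>x y xi eta. x \<in> {0..2 * pi} \<Longrightarrow> (x, y, xi, eta) \<in> tube c r \<Longrightarrow> (x, y, xi, eta) \<in> U"
    using tube_segment_subset[OF U(1,2)] by blast
  define W :: pt where "W = (2 * pi, 0, 0, 0)"
  have "pd v K (q + W) = pd v K q" for v q
    using pd_affine_invariant[OF K(1) bounded_linear_ident, of W 1] sigma_lift_periodic[where f = K, OF K(2)]
    by (simp add: W_def)
  then have per: "pd v K (q + of_int k *\<^sub>R W) = pd v K q" for v q k
    by (rule periodic_of_int)
  have "pd e_x K (x, y, xi, eta) = 0 \<and> pd (0, - y, 0, eta) K (x, y, xi, eta) = 0"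
    if "(x, y, xi, eta) \<in> tube c r" for x y xi eta
  proof -
    define k where "k = \<lfloor>x / (2 * pi)\<rfloor>"
    define x0 where "x0 = x - 2 * pi * k"
    have "of_int k \<le> x / (2 * pi)" "x / (2 * pi) < of_int k + 1"
      unfolding k_def by linarith+
    then have "x0 \<in> {0..2 * pi}"
      by (auto simp: x0_def field_simps)
    then have "(x0, y, xi, eta) \<in> U" by (rule r) (use that in simp)
    moreover have "(x, y, xi, eta) = (x0, y, xi, eta) + of_int k *\<^sub>R W"
      by (simp add: x0_def W_def)
    ultimately show ?thesis
      using U(3) per by (simp add: commutes_on_iff[OF K(1)])
  qed
  then show ?thesis
    using that \<open>r > 0\<close> by (simp add: commutes_on_iff[OF K(1)])
qed

definition sigma_sign :: "sigma_case \<Rightarrow> real" where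
  "sigma_sign s = (if s = Direct then 1 else -1)"

lemma sigma_lift_eq_coord_mult:
  "sigma_lift s p = coord_mult (1, sigma_sign s, 1, sigma_sign s) p + (if s = Direct then 2 * pi else pi, 0, 0, 0)"
  by (cases s; cases p) (simp_all add: sigma_sign_def coord_mult_def)

lemma pd_sigma_lift:
  assumes f: "smooth f" and inv: "\<And>q. f (sigma_lift s q) = k * f q"
  shows "pd e_xi f (sigma_lift s p) = k * pd e_xi f p"
    and "pd e_y f (sigma_lift s p) = sigma_sign s * k * pd e_y f p"
    and "pd e_eta f (sigma_lift s p) = sigma_sign s * k * pd e_eta f p"
proof -
  define L where "L = coord_mult (1, sigma_sign s, 1, sigma_sign s)"
  define w :: pt where "w = (if s = Direct then 2 * pi else pi, 0, 0, 0)"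
  have \<sigma>: "sigma_lift s q = L q + w" for q
    unfolding L_def w_def by (rule sigma_lift_eq_coord_mult)
  have pd_L: "pd (L v) f (sigma_lift s p) = k * pd v f p" for v
    unfolding \<sigma> L_def by (rule pd_affine_invariant[OF f bounded_linear_coord_mult]) (use inv \<sigma> L_def in simp)
  have "L e_xi = e_xi" "L e_y = sigma_sign s *\<^sub>R e_y" "L e_eta = sigma_sign s *\<^sub>R e_eta"
    by (simp_all add: L_def coord_mult_def e_xi_def e_y_def e_eta_def)
  then show "pd e_xi f (sigma_lift s p) = k * pd e_xi f p"
    and "pd e_y f (sigma_lift s p) = sigma_sign s * k * pd e_y f p"
    and "pd e_eta f (sigma_lift s p) = sigma_sign s * k * pd e_eta f p"
    using pd_L[of e_xi] pd_L[of e_y] pd_L[of e_eta]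
    by (auto simp: pd_scaleR[OF f] sigma_sign_def)
qed

text \<open>The coefficients of Hadamard's lemma:
  \<open>xi_coeff c K (x, y, xi, eta) = \<integral>\<^sub>0\<^sup>1 K\<^sub>\<xi>(x, 0, c + t (xi - c), 0) dt\<close> and
  \<open>yeta_coeff K (x, y, xi, eta) = \<integral>\<^sub>0\<^sup>1\<integral>\<^sub>0\<^sup>1 K\<^sub>y\<^sub>\<eta>(x, s y, xi, t eta) ds dt\<close>.\<close>
definition xi_coeff :: "real \<Rightarrow> (pt \<Rightarrow> real) \<Rightarrow> pt \<Rightarrow> real" where
  "xi_coeff c K = param_integral (cbox 0 (1::real)) (pd e_xi K) (\<lambda>_. 1)
     (\<lambda>t. (1, 0, t, 0)) (\<lambda>t. (0, 0, (1 - t) * c, 0))"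

definition yeta_coeff :: "(pt \<Rightarrow> real) \<Rightarrow> pt \<Rightarrow> real" where
  "yeta_coeff K = param_integral (cbox (0, 0) (1::real, 1::real)) (pd e_eta (pd e_y K)) (\<lambda>_. 1)
     (\<lambda>st. (1, fst st, 1, snd st)) (\<lambda>_. 0)"

lemma smooth_xi_coeff: "smooth K \<Longrightarrow> smooth (xi_coeff c K)"
  unfolding xi_coeff_def
  by (intro smooth_param_integral smooth_pd coordinate_vectors_in_Basis continuous_intros)

lemma smooth_yeta_coeff: "smooth K \<Longrightarrow> smooth (yeta_coeff K)"
  unfolding yeta_coeff_def
  by (intro smooth_param_integral smooth_pd coordinate_vectors_in_Basis continuous_intros)

lemma xi_coeff_apply:
  "xi_coeff c K (x, y, xi, eta) = integral {0..1} (\<lambda>t. pd e_xi K ((x, 0, c, 0) + t *\<^sub>R (0, 0, xi - c, 0)))"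
  unfolding xi_coeff_def param_integral_def cbox_interval
  by (rule integral_cong) (simp add: coord_mult_def algebra_simps)

lemma xi_coeff_eq:
  assumes "smooth K"
  shows "(xi - c) * xi_coeff c K (x, y, xi, eta) = K (x, 0, xi, 0) - K (x, 0, c, 0)"
proof -
  have "(xi - c) * xi_coeff c K (x, y, xi, eta) =
      integral {0..1} (\<lambda>t. pd (0, 0, xi - c, 0) K ((x, 0, c, 0) + t *\<^sub>R (0, 0, xi - c, 0)))"
    by (simp add: xi_coeff_apply pd_coords[OF assms])
  also have "\<dots> = K ((x, 0, c, 0) + (0, 0, xi - c, 0)) - K (x, 0, c, 0)"
    by (rule integral_pd_line[OF assms])
  finally show ?thesis by simp
qed

lemma yeta_coeff_apply:
  assumes "smooth K"
  shows "yeta_coeff K (x, y, xi, eta) =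
    integral {0..1} (\<lambda>s. integral {0..1} (\<lambda>t. pd e_eta (pd e_y K) (x, s * y, xi, t * eta)))"
proof -
  have "continuous_on (cbox (0, 0) (1, 1)) (\<lambda>st. pd e_eta (pd e_y K) (x, fst st * y, xi, snd st * eta))"
    by (intro continuous_on_smooth_compose smooth_pd assms coordinate_vectors_in_Basis continuous_intros)
  from integral_prod_continuous[OF this] show ?thesis
    unfolding yeta_coeff_def param_integral_def
    by (simp add: coord_mult_def cbox_interval)
qed

lemma yeta_coeff_eq:
  assumes K: "smooth K"
  shows "y * eta * yeta_coeff K (x, y, xi, eta) =
    K (x, y, xi, eta) - K (x, y, xi, 0) - K (x, 0, xi, eta) + K (x, 0, xi, 0)"
proof -
  define KY where "KY = pd e_y K"
  have KY: "smooth KY" unfolding KY_def by (intro smooth_pd K coordinate_vectors_in_Basis)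
  have inner: "eta * integral {0..1} (\<lambda>t. pd e_eta KY (x, s * y, xi, t * eta)) =
      KY (x, s * y, xi, eta) - KY (x, s * y, xi, 0)" for s
    using integral_pd_line[OF KY, of "(0, 0, 0, eta)" "(x, s * y, xi, 0)"]
    by (simp add: pd_coords[OF KY])
  have outer: "y * integral {0..1} (\<lambda>s. KY (x, s * y, xi, e)) = K (x, y, xi, e) - K (x, 0, xi, e)" for e
    using integral_pd_line[OF K, of "(0, y, 0, 0)" "(x, 0, xi, e)"]
    by (simp add: pd_coords[OF K] KY_def)
  have integrable: "(\<lambda>s. KY (x, s * y, xi, e)) integrable_on {0..1}" for e
    by (intro integrable_continuous_real continuous_on_smooth_compose[OF KY] continuous_intros)
  have "eta * yeta_coeff K (x, y, xi, eta) =
      integral {0..1} (\<lambda>s. eta * integral {0..1} (\<lambda>t. pd e_eta KY (x, s * y, xi, t * eta)))"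
    unfolding yeta_coeff_apply[OF K] KY_def by (simp only: integral_mult_right)
  also have "\<dots> = integral {0..1} (\<lambda>s. KY (x, s * y, xi, eta) - KY (x, s * y, xi, 0))"
    by (simp only: inner)
  also have "\<dots> = integral {0..1} (\<lambda>s. KY (x, s * y, xi, eta)) - integral {0..1} (\<lambda>s. KY (x, s * y, xi, 0))"
    by (rule integral_diff[OF integrable integrable])
  finally show ?thesis
    using outer[of eta] outer[of 0] by (simp add: right_diff_distrib mult.assoc)
qed

lemma xi_coeff_sigma_invariant:
  assumes "smooth K" "\<And>q. K (sigma_lift s q) = K q"
  shows "xi_coeff c K (sigma_lift s p) = xi_coeff c K p"
  unfolding xi_coeff_def param_integral_def
proof (rule integral_cong)
  fix t
  have "coord_mult (1, 0, t, 0) (sigma_lift s p) + (0, 0, (1 - t) * c, 0) =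
      sigma_lift s (coord_mult (1, 0, t, 0) p + (0, 0, (1 - t) * c, 0))"
    by (cases s; cases p) (simp_all add: coord_mult_def)
  then show "1 * pd e_xi K (coord_mult (1, 0, t, 0) (sigma_lift s p) + (0, 0, (1 - t) * c, 0)) =
      1 * pd e_xi K (coord_mult (1, 0, t, 0) p + (0, 0, (1 - t) * c, 0))"
    using pd_sigma_lift(1)[OF assms(1), of s 1] assms(2) by simp
qed

lemma yeta_coeff_sigma_invariant:
  assumes K: "smooth K" and inv: "\<And>q. K (sigma_lift s q) = K q"
  shows "yeta_coeff K (sigma_lift s p) = yeta_coeff K p"
  unfolding yeta_coeff_def param_integral_def
proof (rule integral_cong)
  fix st :: "real \<times> real"
  have KY: "smooth (pd e_y K)" by (intro smooth_pd K coordinate_vectors_in_Basis)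
  have "pd e_y K (sigma_lift s q) = sigma_sign s * pd e_y K q" for q
    using pd_sigma_lift(2)[OF K, of s 1] inv by simp
  then have "pd e_eta (pd e_y K) (sigma_lift s q) = pd e_eta (pd e_y K) q" for q
    using pd_sigma_lift(3)[OF KY, of s "sigma_sign s"] by (simp add: sigma_sign_def)
  moreover have "coord_mult (1, fst st, 1, snd st) (sigma_lift s p) + 0 =
      sigma_lift s (coord_mult (1, fst st, 1, snd st) p + 0)"
    by (cases s; cases p) (simp_all add: coord_mult_def)
  ultimately show "1 * pd e_eta (pd e_y K) (coord_mult (1, fst st, 1, snd st) (sigma_lift s p) + 0) =
      1 * pd e_eta (pd e_y K) (coord_mult (1, fst st, 1, snd st) p + 0)"
    by simp
qed

lemma commutes_on_tube_x_independent:
  assumes K: "smooth K" "commutes_on (tube c r) K" and p: "(x, y, xi, eta) \<in> tube c r"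
  shows "K (x', y, xi, eta) = K (x, y, xi, eta)"
proof -
  have "K ((x, y, xi, eta) + (x' - x, 0, 0, 0)) = K (x, y, xi, eta)"
    by (rule eq_if_pd_line_eq_0[OF K(1)])
      (use K(2) p in \<open>simp add: pd_coords[OF K(1)] commutes_on_iff[OF K(1)]\<close>)
  then show ?thesis by simp
qed

lemma commutes_on_tube_eq_at_eta_0:
  assumes K: "smooth K" "commutes_on (tube c r) K" and p: "(x, y, xi, eta) \<in> tube c r"
  shows "K (x, y, xi, 0) = K (x, 0, xi, 0)"
proof -
  have "K ((x, 0, xi, 0) + (0, y, 0, 0)) = K (x, 0, xi, 0)"
  proof (rule eq_if_pd_line_eq_0[OF K(1)])
    fix t :: real assume t: "0 < t" "t < 1"
    then have "(x, t * y, xi, 0) \<in> tube c r"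
      using p mult_left_le_one_le[of "\<bar>y\<bar>" t] abs_ge_zero[of y] by (auto simp: abs_mult)
    then have "pd (0, - (t * y), 0, 0) K (x, t * y, xi, 0) = 0"
      using K(2) commutes_on_iff[OF K(1)] by blast
    then show "pd (0, y, 0, 0) K ((x, 0, xi, 0) + t *\<^sub>R (0, y, 0, 0)) = 0"
      using t by (simp add: pd_coords[OF K(1)])
  qed
  then show ?thesis by simp
qed

lemma commutes_on_tube_eq_at_y_0:
  assumes K: "smooth K" "commutes_on (tube c r) K" and p: "(x, y, xi, eta) \<in> tube c r"
  shows "K (x, 0, xi, eta) = K (x, 0, xi, 0)"
proof -
  have "K ((x, 0, xi, 0) + (0, 0, 0, eta)) = K (x, 0, xi, 0)"
  proof (rule eq_if_pd_line_eq_0[OF K(1)])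
    fix t :: real assume t: "0 < t" "t < 1"
    then have "(x, 0, xi, t * eta) \<in> tube c r"
      using p mult_left_le_one_le[of "\<bar>eta\<bar>" t] abs_ge_zero[of eta] by (auto simp: abs_mult)
    then have "pd (0, - 0, 0, t * eta) K (x, 0, xi, t * eta) = 0"
      using K(2) commutes_on_iff[OF K(1)] by blast
    then show "pd (0, 0, 0, eta) K ((x, 0, xi, 0) + t *\<^sub>R (0, 0, 0, eta)) = 0"
      using t by (simp add: pd_coords[OF K(1)])
  qed
  then show ?thesis by simp
qed

lemma commutes_on_tube_decomposition:
  assumes K: "smooth K" "commutes_on (tube c r) K" and K0: "\<And>x. K (x, 0, c, 0) = 0"
    and p: "(x, y, xi, eta) \<in> tube c r"
  shows "K (x, y, xi, eta) = xi_coeff c K (x, y, xi, eta) * (xi - c) + yeta_coeff K (x, y, xi, eta) * (y * eta)"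
  using xi_coeff_eq[OF K(1), of xi c x y eta] yeta_coeff_eq[OF K(1), of y eta x xi] K0[of x]
    commutes_on_tube_eq_at_eta_0[OF K p] commutes_on_tube_eq_at_y_0[OF K p]
  by (simp add: algebra_simps)

lemma xi_coeff_pd_x_off_axes:
  assumes K: "smooth K" "commutes_on (tube c r) K" and q: "(x, y, xi, eta) \<in> tube c r" "xi \<noteq> c"
  shows "pd e_x (xi_coeff c K) (x, y, xi, eta) = 0"
proof (rule pd_eq_0_if_scaled_line_const[OF smooth_xi_coeff[OF K(1)], where m = "xi - c"])
  show "xi - c \<noteq> 0" using q(2) by simp
  have "(x, 0, xi, 0) \<in> tube c r" "(x, 0, c, 0) \<in> tube c r" using q by auto
  note x_independent = commutes_on_tube_x_independent[OF K this(1)] commutes_on_tube_x_independent[OF K this(2)]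
  show "(xi - c) * xi_coeff c K ((x, y, xi, eta) + t *\<^sub>R e_x) = K (x, 0, xi, 0) - K (x, 0, c, 0)" for t
    using x_independent[of "x + t"] by (simp add: e_x_def xi_coeff_eq[OF K(1)])
qed

lemma xi_coeff_commutes_on_tube:
  assumes K: "smooth K" "commutes_on (tube c r) K"
  shows "commutes_on (tube c r) (xi_coeff c K)"
proof -
  let ?a = "xi_coeff c K"
  have a: "smooth ?a" by (rule smooth_xi_coeff[OF K(1)])
  have "pd e_y ?a p = 0" "pd e_eta ?a p = 0" for p
    by (rule pd_eq_0_if_scaled_line_const[OF a, of 1 _ _ "?a p"];
        cases p; simp add: e_y_def e_eta_def xi_coeff_apply)+
  moreover have "pd e_x ?a p = 0" if "p \<in> tube c r" for p
    by (rule tube_eq_0_if_eq_0_off_axes[OF _ that])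
      (auto intro: smooth_imp_continuous_on smooth_pd a coordinate_vectors_in_Basis
        xi_coeff_pd_x_off_axes[OF K])
  ultimately show ?thesis
    by (simp add: commutes_on_iff[OF a] pd_coords[OF a])
qed

lemma yeta_coeff_pd_x_off_axes:
  assumes K: "smooth K" "commutes_on (tube c r) K"
    and q: "(x, y, xi, eta) \<in> tube c r" "y \<noteq> 0" "eta \<noteq> 0"
  shows "pd e_x (yeta_coeff K) (x, y, xi, eta) = 0"
proof (rule pd_eq_0_if_scaled_line_const[OF smooth_yeta_coeff[OF K(1)], where m = "y * eta"])
  show "y * eta \<noteq> 0" using q(2,3) by simp
  have "(x, y, xi, 0) \<in> tube c r" "(x, 0, xi, eta) \<in> tube c r" "(x, 0, xi, 0) \<in> tube c r"
    using q by auto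
  note x_independent = commutes_on_tube_x_independent[OF K q(1)]
    commutes_on_tube_x_independent[OF K this(1)] commutes_on_tube_x_independent[OF K this(2)]
    commutes_on_tube_x_independent[OF K this(3)]
  show "y * eta * yeta_coeff K ((x, y, xi, eta) + t *\<^sub>R e_x) =
      K (x, y, xi, eta) - K (x, y, xi, 0) - K (x, 0, xi, eta) + K (x, 0, xi, 0)" for t
    using x_independent[of "x + t"] by (simp add: e_x_def yeta_coeff_eq[OF K(1)])
qed

lemma yeta_coeff_pd_hamiltonian_off_axes:
  assumes K: "smooth K" "commutes_on (tube c r) K"
    and q: "(x, y, xi, eta) \<in> tube c r" "y \<noteq> 0" "eta \<noteq> 0"
  shows "pd (0, - y, 0, eta) (yeta_coeff K) (x, y, xi, eta) = 0"
proof -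
  define v :: pt where "v = (0, - y, 0, eta)"
  text \<open>Along \<open>v\<close> the weight \<open>y * eta\<close> is stationary, so \<open>y * eta * pd v (yeta_coeff K)\<close> is
    the derivative of the right-hand side of \<open>yeta_coeff_eq\<close>, which vanishes term by term
    by the bracket condition on \<open>K\<close>.\<close>
  have "pd v (yeta_coeff K) (x, y, xi, eta) = 0"
  proof (rule pd_eq_0_if_weighted_line_deriv_eq_0[OF smooth_yeta_coeff[OF K(1)],
        where m = "\<lambda>t. (y - t * y) * (eta + t * eta)"])
    show "((\<lambda>t. (y - t * y) * (eta + t * eta)) has_real_derivative 0) (at 0)"
      by (auto intro!: derivative_eq_intros)
    show "(y - 0 * y) * (eta + 0 * eta) \<noteq> 0" using q by simp
    have "(x, y, xi, 0) \<in> tube c r" "(x, 0, xi, eta) \<in> tube c r" using q by auto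
    with q(1) K(2) have "pd v K (x, y, xi, eta) = 0" "pd (0, - y, 0, 0) K (x, y, xi, 0) = 0"
        "pd (0, - 0, 0, eta) K (x, 0, xi, eta) = 0"
      unfolding v_def commutes_on_iff[OF K(1)] by blast+
    then have "((\<lambda>t. K ((x, y, xi, eta) + t *\<^sub>R v) - K ((x, y, xi, 0) + t *\<^sub>R (0, - y, 0, 0))
        - K ((x, 0, xi, eta) + t *\<^sub>R (0, 0, 0, eta)) + K (x, 0, xi, 0)) has_real_derivative 0) (at 0)"
      using DERIV_add[OF DERIV_diff[OF DERIV_diff[OF
            has_real_derivative_line[OF K(1), of "(x, y, xi, eta)" v 0 UNIV]
            has_real_derivative_line[OF K(1), of "(x, y, xi, 0)" "(0, - y, 0, 0)" 0 UNIV]]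
            has_real_derivative_line[OF K(1), of "(x, 0, xi, eta)" "(0, 0, 0, eta)" 0 UNIV]]
          DERIV_const]
      by simp
    moreover have "(y - t * y) * (eta + t * eta) * yeta_coeff K ((x, y, xi, eta) + t *\<^sub>R v) =
        K ((x, y, xi, eta) + t *\<^sub>R v) - K ((x, y, xi, 0) + t *\<^sub>R (0, - y, 0, 0))
        - K ((x, 0, xi, eta) + t *\<^sub>R (0, 0, 0, eta)) + K (x, 0, xi, 0)" for t
      using yeta_coeff_eq[OF K(1), of "y - t * y" "eta + t * eta" x xi] by (simp add: v_def)
    ultimately show "((\<lambda>t. (y - t * y) * (eta + t * eta) * yeta_coeff K ((x, y, xi, eta) + t *\<^sub>R v))
        has_real_derivative 0) (at 0)"
      by simp
  qed
  then show ?thesis by (simp add: v_def)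
qed

lemma yeta_coeff_commutes_on_tube:
  assumes K: "smooth K" "commutes_on (tube c r) K"
  shows "commutes_on (tube c r) (yeta_coeff K)"
proof -
  let ?b = "yeta_coeff K"
  have b: "smooth ?b" by (rule smooth_yeta_coeff[OF K(1)])
  have "pd e_x ?b p = 0" if "p \<in> tube c r" for p
    by (rule tube_eq_0_if_eq_0_off_axes[OF _ that])
      (auto intro: smooth_imp_continuous_on smooth_pd b coordinate_vectors_in_Basis
        yeta_coeff_pd_x_off_axes[OF K])
  moreover have "pd (0, - y, 0, eta) ?b (x, y, xi, eta) = 0" if "(x, y, xi, eta) \<in> tube c r" for x y xi eta
  proof -
    let ?F = "\<lambda>p. pd (0, - fst (snd p), 0, snd (snd (snd p))) ?b p"
    have "continuous_on UNIV ?F"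
      unfolding pd_coords[OF b]
      by (intro continuous_intros smooth_imp_continuous_on smooth_pd b coordinate_vectors_in_Basis)
    from tube_eq_0_if_eq_0_off_axes[where F = ?F, OF this that]
    show ?thesis
      by (simp add: yeta_coeff_pd_hamiltonian_off_axes[OF K])
  qed
  ultimately show ?thesis
    by (simp add: commutes_on_iff[OF b])
qed

lemma xi_coeff_in_commutant:
  assumes "K \<in> commutant s c"
  shows "xi_coeff c K \<in> commutant s c"
proof -
  obtain r where r: "r > 0" "commutes_on (tube c r) K"
    using commutant_commutes_on_tube[OF assms] .
  have K: "smooth K" "\<And>p. K (sigma_lift s p) = K p"
    using assms by (auto simp: commutant_iff)
  show ?thesis
    unfolding commutant_iff
    by (intro conjI allI exI[of _ "tube c r"] smooth_xi_coeff K(1) xi_coeff_sigma_invariant[OF K]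
        xi_coeff_commutes_on_tube[OF K(1) r(2)] open_tube gamma_subset_tube r(1))
qed

lemma yeta_coeff_in_commutant:
  assumes "K \<in> commutant s c"
  shows "yeta_coeff K \<in> commutant s c"
proof -
  obtain r where r: "r > 0" "commutes_on (tube c r) K"
    using commutant_commutes_on_tube[OF assms] .
  have K: "smooth K" "\<And>p. K (sigma_lift s p) = K p"
    using assms by (auto simp: commutant_iff)
  show ?thesis
    unfolding commutant_iff
    by (intro conjI allI exI[of _ "tube c r"] smooth_yeta_coeff K(1) yeta_coeff_sigma_invariant[OF K]
        yeta_coeff_commutes_on_tube[OF K(1) r(2)] open_tube gamma_subset_tube r(1))
qed

theorem lemma2p2:
  fixes s :: sigma_case and c :: real and K :: "pt \<Rightarrow> real"
  assumes "K \<in> commutant s c"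
    and "\<forall>p\<in>gamma c. K p = 0"
  shows "\<exists>a b U. a \<in> commutant s c \<and> b \<in> commutant s c \<and> open U \<and> gamma c \<subseteq> U \<and>
           (\<forall>x y xi eta. (x, y, xi, eta) \<in> U \<longrightarrow>
               K (x, y, xi, eta) = a (x, y, xi, eta) * (xi - c) + b (x, y, xi, eta) * (y * eta)) \<and>
           (\<forall>x x' y xi eta. (x, y, xi, eta) \<in> U \<longrightarrow> (x', y, xi, eta) \<in> U \<longrightarrow>
               K (x, y, xi, eta) = K (x', y, xi, eta))"
proof -
  obtain r where "r > 0" and r: "commutes_on (tube c r) K"
    using commutant_commutes_on_tube[OF assms(1)] .
  have K: "smooth K" using assms(1) by (simp add: commutant_iff)
  have "K (x, 0, c, 0) = 0" for x using assms(2) by (auto simp: gamma_def)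
  then have decomposition: "\<forall>x y xi eta. (x, y, xi, eta) \<in> tube c r \<longrightarrow>
      K (x, y, xi, eta) = xi_coeff c K (x, y, xi, eta) * (xi - c) + yeta_coeff K (x, y, xi, eta) * (y * eta)"
    using commutes_on_tube_decomposition[OF K r] by blast
  have x_independent: "\<forall>x x' y xi eta. (x, y, xi, eta) \<in> tube c r \<longrightarrow> (x', y, xi, eta) \<in> tube c r \<longrightarrow>
      K (x, y, xi, eta) = K (x', y, xi, eta)"
    by (metis commutes_on_tube_x_independent[OF K r])
  show ?thesis
    by (intro exI[of _ "xi_coeff c K"] exI[of _ "yeta_coeff K"] exI[of _ "tube c r"] conjI
        xi_coeff_in_commutant[OF assms(1)] yeta_coeff_in_commutant[OF assms(1)] open_tube
        gamma_subset_tube[OF \<open>r > 0\<close>] decomposition x_independent)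
qed

end
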